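(* Every structure over a binary signature which has bounded degree is ptp-conservative.
   Context: A binary signature consists of relation symbols of arity at most 2 and constants. A structure has bounded degree if there is $N$ such that every element occurs together with at most $N$ other elements in binary atoms. Positive types: for a structure $\mathcal C$ over signature $\Theta$, $e\in\mathcal C$, $n\in\mathbb N$, $ptp_n(\mathcal C,e,\Theta)$ is the set of conjunctive queries $\Psi(\bar x,y)$ with $|\bar x|<n$ over relations and constants of $\Theta$ (equality atoms $x=c$ allowed) with $\mathcal C\models\exists\bar x\Psi(\bar x,e)$; $d\equiv_n e$ iff their positive $n$-types coincide; $M_n^\Theta(\mathcal C)$ is the quotient $\mathcal C/\equiv_n$ where a tuple of classes is in $R$ iff some representatives are; $q_n$ is the quotient map. Colors are unary predicates $K^l_h$. A coloring of $\mathcal C$ (over $\Sigma$) is a structure $\bar{\mathcal C}$ over a finite signature $\bar\Sigma$ with $\Sigma\subseteq\bar\Sigma\subseteq\Sigma\cup\{K^l_h\}$, restricting to $\mathcal C$ on $\Sigma$, in which each element satisfies exactly one color. $\bar{\mathcal C}$ is $n$-conservative up to size $m$ if $ptp_m(\mathcal C,e,\Sigma)=ptp_m(M^{\bar\Sigma}_n(\bar{\mathcal C}),q_n(e),\Sigma)$ for every $e\in\mathcal C$. $\mathcal C$ is ptp-conservative if for every $m$ there exist $n$ and a coloring of $\mathcal C$ which is $n$-conservative up to size $m$. *)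

theory Defs
  imports Main
begin

record ('r, 'c) sgn =
  rels :: "'r set"
  sconsts :: "'c set"
  arity :: "'r \<Rightarrow> nat"

definition binary_sig :: "('r, 'c) sgn \<Rightarrow> bool" where
  "binary_sig \<Theta> \<longleftrightarrow> (\<forall>r\<in>rels \<Theta>. arity \<Theta> r \<le> 2)"

record ('a, 'r, 'c) struct =
  sdom :: "'a set"
  rel :: "'r \<Rightarrow> 'a list set"
  cst :: "'c \<Rightarrow> 'a"

definition wf_struct :: "('r, 'c) sgn \<Rightarrow> ('a, 'r, 'c) struct \<Rightarrow> bool" where
  "wf_struct \<Theta> M \<longleftrightarrow> sdom M \<noteq> {}
     \<and> (\<forall>c\<in>sconsts \<Theta>. cst M c \<in> sdom M)
     \<and> (\<forall>r\<in>rels \<Theta>. \<forall>ts\<in>rel M r. length ts = arity \<Theta> r \<and> set ts \<subseteq> sdom M)"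

definition neighbours :: "('r, 'c) sgn \<Rightarrow> ('a, 'r, 'c) struct \<Rightarrow> 'a \<Rightarrow> 'a set" where
  "neighbours \<Theta> M a = {b. b \<noteq> a \<and> (\<exists>r\<in>rels \<Theta>. [a, b] \<in> rel M r \<or> [b, a] \<in> rel M r)}"

definition bounded_degree :: "('r, 'c) sgn \<Rightarrow> ('a, 'r, 'c) struct \<Rightarrow> bool" where
  "bounded_degree \<Theta> M \<longleftrightarrow>
     (\<exists>N::nat. \<forall>a\<in>sdom M. finite (neighbours \<Theta> M a) \<and> card (neighbours \<Theta> M a) \<le> N)"

text \<open>Terms: variables (V 0 is the distinguished free variable y, V 1, ..., V k are the
  existentially quantified variables x-bar) or constants.\<close>
datatype 'c trm = V nat | C 'c

datatype ('r, 'c) atom = RelA 'r "'c trm list" | EqA nat 'c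

text \<open>A conjunctive query \<Psi>(x_1..x_k, y) is a pair (k, list of atoms).\<close>
type_synonym ('r, 'c) cq = "nat \<times> ('r, 'c) atom list"

fun wf_trm :: "('r, 'c) sgn \<Rightarrow> nat \<Rightarrow> 'c trm \<Rightarrow> bool" where
  "wf_trm \<Theta> k (V i) = (i \<le> k)"
| "wf_trm \<Theta> k (C c) = (c \<in> sconsts \<Theta>)"

fun wf_atom :: "('r, 'c) sgn \<Rightarrow> nat \<Rightarrow> ('r, 'c) atom \<Rightarrow> bool" where
  "wf_atom \<Theta> k (RelA r ts) =
     (r \<in> rels \<Theta> \<and> length ts = arity \<Theta> r \<and> (\<forall>t\<in>set ts. wf_trm \<Theta> k t))"
| "wf_atom \<Theta> k (EqA i c) = (i \<le> k \<and> c \<in> sconsts \<Theta>)"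

fun eval_trm :: "('a, 'r, 'c) struct \<Rightarrow> (nat \<Rightarrow> 'a) \<Rightarrow> 'c trm \<Rightarrow> 'a" where
  "eval_trm M v (V i) = v i"
| "eval_trm M v (C c) = cst M c"

fun holds_atom :: "('a, 'r, 'c) struct \<Rightarrow> (nat \<Rightarrow> 'a) \<Rightarrow> ('r, 'c) atom \<Rightarrow> bool" where
  "holds_atom M v (RelA r ts) = (map (eval_trm M v) ts \<in> rel M r)"
| "holds_atom M v (EqA i c) = (v i = cst M c)"

definition ptp :: "nat \<Rightarrow> ('a, 'r, 'c) struct \<Rightarrow> 'a \<Rightarrow> ('r, 'c) sgn \<Rightarrow> ('r, 'c) cq set" where
  "ptp n M e \<Theta> = {(k, as). k < n \<and> (\<forall>a\<in>set as. wf_atom \<Theta> k a) \<and>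
      (\<exists>v. v 0 = e \<and> (\<forall>i\<in>{1..k}. v i \<in> sdom M) \<and> (\<forall>a\<in>set as. holds_atom M v a))}"

definition ptp_equiv :: "nat \<Rightarrow> ('r, 'c) sgn \<Rightarrow> ('a, 'r, 'c) struct \<Rightarrow> 'a \<Rightarrow> 'a \<Rightarrow> bool" where
  "ptp_equiv n \<Theta> M d e \<longleftrightarrow> ptp n M d \<Theta> = ptp n M e \<Theta>"

definition qmap :: "nat \<Rightarrow> ('r, 'c) sgn \<Rightarrow> ('a, 'r, 'c) struct \<Rightarrow> 'a \<Rightarrow> 'a set" where
  "qmap n \<Theta> M e = {d\<in>sdom M. ptp_equiv n \<Theta> M d e}"

definition quot :: "nat \<Rightarrow> ('r, 'c) sgn \<Rightarrow> ('a, 'r, 'c) struct \<Rightarrow> ('a set, 'r, 'c) struct" where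
  "quot n \<Theta> M =
     \<lparr> sdom = qmap n \<Theta> M ` sdom M,
       rel = (\<lambda>r. {Xs. (\<forall>X\<in>set Xs. X \<in> qmap n \<Theta> M ` sdom M) \<and>
                     (\<exists>ds. length ds = length Xs \<and> ds \<in> rel M r \<and>
                          (\<forall>i<length ds. ds ! i \<in> Xs ! i))}),
       cst = (\<lambda>c. qmap n \<Theta> M (cst M c)) \<rparr>"

datatype 'r csym = Base 'r | Color nat nat

definition colsig :: "('r, 'c) sgn \<Rightarrow> (nat \<times> nat) set \<Rightarrow> ('r csym, 'c) sgn" where
  "colsig \<Sigma> K =
     \<lparr> rels = Base ` rels \<Sigma> \<union> (\<lambda>(l, h). Color l h) ` K,
       sconsts = sconsts \<Sigma>,
       arity = (\<lambda>s. case s of Base r \<Rightarrow> arity \<Sigma> r | Color _ _ \<Rightarrow> 1) \<rparr>"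

definition reduct :: "('a, 'r csym, 'c) struct \<Rightarrow> ('a, 'r, 'c) struct" where
  "reduct M = \<lparr> sdom = sdom M, rel = (\<lambda>r. rel M (Base r)), cst = cst M \<rparr>"

definition is_coloring ::
  "('r, 'c) sgn \<Rightarrow> ('a, 'r, 'c) struct \<Rightarrow> (nat \<times> nat) set \<Rightarrow> ('a, 'r csym, 'c) struct \<Rightarrow> bool" where
  "is_coloring \<Sigma> M K Mb \<longleftrightarrow>
     finite K \<and> wf_struct (colsig \<Sigma> K) Mb \<and>
     sdom Mb = sdom M \<and>
     (\<forall>r\<in>rels \<Sigma>. rel Mb (Base r) = rel M r) \<and>
     (\<forall>c\<in>sconsts \<Sigma>. cst Mb c = cst M c) \<and>
     (\<forall>a\<in>sdom Mb. \<exists>!lh\<in>K. [a] \<in> rel Mb (Color (fst lh) (snd lh)))"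

definition conservative_upto ::
  "('r, 'c) sgn \<Rightarrow> ('a, 'r, 'c) struct \<Rightarrow> (nat \<times> nat) set \<Rightarrow> ('a, 'r csym, 'c) struct
     \<Rightarrow> nat \<Rightarrow> nat \<Rightarrow> bool" where
  "conservative_upto \<Sigma> M K Mb n m \<longleftrightarrow>
     (\<forall>e\<in>sdom M. ptp m M e \<Sigma> =
        ptp m (reduct (quot n (colsig \<Sigma> K) Mb)) (qmap n (colsig \<Sigma> K) Mb e) \<Sigma>)"

definition ptp_conservative :: "('r, 'c) sgn \<Rightarrow> ('a, 'r, 'c) struct \<Rightarrow> bool" where
  "ptp_conservative \<Sigma> M \<longleftrightarrow>
     (\<forall>m. \<exists>n K Mb. is_coloring \<Sigma> M K Mb \<and> conservative_upto \<Sigma> M K Mb n m)"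

end

theory Submission
  imports Defs
begin

text \<open>
  Fix the query size m and put D = m * m.  Colour the structure so that distinct elements at
  Gaifman distance at most 2D + 2 get distinct colours; by bounded degree such balls are
  uniformly finite, so finitely many colours suffice.  The quotient map for (D + 2)-types of the
  coloured structure is a homomorphism, so positive types can only grow in the quotient.

  For the converse, colours make types rigid: if a and a' have the same t-type (t \<ge> 2) and w' is
  an R-neighbour of a', then a has an R-neighbour w of the same colour, necessarily unique, and w
  has the same (t - 1)-type as w'.  A query satisfied in the quotient is lifted one connected
  component of its variable graph at a time: starting from a representative of the least variable
  and walking along the at most D edges of the component, every variable gets an element of
  the right 2-type near this anchor, uniquely determined by its colour.  Uniqueness makes the lifts
  of adjacent variables adjacent, and binary atoms involving constants are transferred by types.
\<close>

section \<open>Proper colourings of bounded-degree graphs\<close>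

text \<open>A partial colouring is a set of vertex-colour pairs, so that the union of a chain of
  pairwise compatible ones is again one.\<close>

definition colour_compatible :: "('a \<Rightarrow> 'a set) \<Rightarrow> 'a \<times> nat \<Rightarrow> 'a \<times> nat \<Rightarrow> bool" where
  "colour_compatible nb p q \<longleftrightarrow>
     (fst p = fst q \<longrightarrow> snd p = snd q) \<and> (fst q \<in> nb (fst p) \<longrightarrow> snd p \<noteq> snd q)"

lemma partial_colouring_extend:
  assumes G: "G \<subseteq> X \<times> {0..B}" "pairwise (colour_compatible nb) G"
    and a: "a \<in> X" "\<nexists>x. (a, x) \<in> G"
    and deg: "finite (nb a)" "card (nb a) \<le> B"
    and sym: "\<forall>b\<in>X. a \<in> nb b \<longrightarrow> b \<in> nb a"
  shows "\<exists>x\<le>B. pairwise (colour_compatible nb) (insert (a, x) G)"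
proof -
  let ?used = "G \<inter> nb a \<times> UNIV"
  have "inj_on fst ?used"
    using G(2) by (auto simp: inj_on_def colour_compatible_def pairwise_def prod_eq_iff)
  then have "card ?used \<le> card (nb a)"
    using deg by (intro card_inj_on_le) auto
  moreover have "finite ?used"
    using G(1) deg by (auto intro: finite_subset[of _ "nb a \<times> {0..B}"])
  ultimately have "card (snd ` ?used) \<le> B"
    using deg card_image_le[of ?used snd] by fastforce
  then have "\<not> {0..B} \<subseteq> snd ` ?used"
    using \<open>finite ?used\<close> card_mono[of "snd ` ?used" "{0..B}"] by fastforce
  then obtain x where x: "x \<le> B" "x \<notin> snd ` ?used"
    by (meson atLeastAtMost_iff subsetI zero_le)
  have "colour_compatible nb (a, x) q \<and> colour_compatible nb q (a, x)" if "q \<in> G" for q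
  proof -
    have "fst q \<in> X" "fst q \<noteq> a" using that G(1) a(2) by (auto simp: prod_eq_iff)
    moreover have "snd q \<noteq> x" if "fst q \<in> nb a"
      using \<open>q \<in> G\<close> that x(2) by (metis IntI mem_Times_iff UNIV_I image_eqI)
    ultimately show ?thesis using sym by (auto simp: colour_compatible_def)
  qed
  then show ?thesis using G(2) x(1) by (auto simp: pairwise_insert)
qed

lemma bounded_degree_colouring:
  fixes nb :: "'a \<Rightarrow> 'a set"
  assumes deg: "\<forall>a\<in>X. finite (nb a) \<and> card (nb a) \<le> B"
    and irrefl: "\<forall>a\<in>X. a \<notin> nb a"
    and sym: "\<forall>a\<in>X. \<forall>b\<in>X. b \<in> nb a \<longrightarrow> a \<in> nb b"
  shows "\<exists>c. (\<forall>a\<in>X. c a \<le> B) \<and> (\<forall>a\<in>X. \<forall>b\<in>X. b \<in> nb a \<longrightarrow> c a \<noteq> c b)"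
proof -
  define partial where "partial = {G. G \<subseteq> X \<times> {0..B} \<and> pairwise (colour_compatible nb) G}"
  have "\<exists>G\<in>partial. \<forall>H\<in>partial. G \<subseteq> H \<longrightarrow> H = G"
  proof (rule subset_Zorn')
    fix C assume "subset.chain partial C"
    then have "C \<subseteq> partial" "chain\<^sub>\<subseteq> C"
      by (auto simp: subset_chain_def chain_subset_def)
    then show "\<Union>C \<in> partial"
      unfolding partial_def by (auto intro: pairwise_chain_Union)
  qed
  then obtain G where "G \<in> partial" and maximal: "\<And>H. H \<in> partial \<Longrightarrow> G \<subseteq> H \<Longrightarrow> H = G"
    by blast
  then have G: "G \<subseteq> X \<times> {0..B}" "pairwise (colour_compatible nb) G"
    by (simp_all add: partial_def)
  have compatible: "colour_compatible nb p q" if "p \<in> G" "q \<in> G" for p q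
  proof (cases "p = q")
    case True
    then show ?thesis using that G(1) irrefl by (auto simp: colour_compatible_def)
  qed (use G(2) that in \<open>simp add: pairwise_def\<close>)
  have total: "\<exists>x. (a, x) \<in> G" if a: "a \<in> X" for a
  proof (rule ccontr)
    assume uncoloured: "\<nexists>x. (a, x) \<in> G"
    then obtain x where "x \<le> B" "pairwise (colour_compatible nb) (insert (a, x) G)"
      using partial_colouring_extend[OF G a uncoloured] deg sym a by blast
    then have "insert (a, x) G \<in> partial" using G(1) a by (simp add: partial_def)
    then show False using maximal uncoloured by blast
  qed
  define c where "c a = (THE x. (a, x) \<in> G)" for a
  have c: "(a, c a) \<in> G" if "a \<in> X" for a
    using total[OF that] compatible unfolding c_def colour_compatible_def
    by (metis fst_conv snd_conv theI)
  show ?thesis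
  proof (intro exI conjI ballI impI)
    show "c a \<le> B" if "a \<in> X" for a using c[OF that] G(1) by auto
    show "c a \<noteq> c b" if "a \<in> X" "b \<in> X" "b \<in> nb a" for a b
      using compatible[OF c c] that unfolding colour_compatible_def by auto
  qed
qed

section \<open>Gaifman balls\<close>

definition gaifman_edges :: "('r, 'c) sgn \<Rightarrow> ('a, 'r, 'c) struct \<Rightarrow> 'a rel" where
  "gaifman_edges S M = {(a, b). a \<in> sdom M \<and> (b = a \<or> b \<in> neighbours S M a)}"

definition gaifman_ball :: "('r, 'c) sgn \<Rightarrow> ('a, 'r, 'c) struct \<Rightarrow> nat \<Rightarrow> 'a \<Rightarrow> 'a set" where
  "gaifman_ball S M j a = (gaifman_edges S M ^^ j) `` {a}"

lemma gaifman_ball_0 [simp]: "gaifman_ball S M 0 a = {a}"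
  by (simp add: gaifman_ball_def)

lemma gaifman_ball_Suc:
  "gaifman_ball S M (Suc j) a = (\<Union>b\<in>gaifman_ball S M j a. gaifman_edges S M `` {b})"
  by (auto simp: gaifman_ball_def)

lemma neighbour_in_gaifman_ball:
  assumes "a \<in> sdom M" "r \<in> rels S" "[a, b] \<in> rel M r \<or> [b, a] \<in> rel M r"
  shows "b \<in> gaifman_ball S M 1 a"
  using assms by (auto simp: gaifman_ball_def gaifman_edges_def neighbours_def)

lemma neighbours_subset_sdom: "wf_struct S M \<Longrightarrow> neighbours S M a \<subseteq> sdom M"
  by (fastforce simp: neighbours_def wf_struct_def)

lemma gaifman_edges_sym:
  assumes "wf_struct S M" "(a, b) \<in> gaifman_edges S M"
  shows "(b, a) \<in> gaifman_edges S M"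
  using assms neighbours_subset_sdom[OF assms(1), of a]
  by (auto simp: gaifman_edges_def neighbours_def)

lemma gaifman_ball_sym:
  assumes "wf_struct S M" "b \<in> gaifman_ball S M j a"
  shows "a \<in> gaifman_ball S M j b"
proof -
  have "(b, a) \<in> gaifman_edges S M ^^ j" if "(a, b) \<in> gaifman_edges S M ^^ j" for a b
    using that
  proof (induction j arbitrary: b)
    case (Suc j)
    then obtain y where "(a, y) \<in> gaifman_edges S M ^^ j" "(y, b) \<in> gaifman_edges S M"
      by auto
    with Suc.IH show ?case using gaifman_edges_sym[OF assms(1)] by (meson relpow_Suc_I2)
  qed simp
  then show ?thesis using assms(2) by (auto simp: gaifman_ball_def)
qed

lemma gaifman_ball_trans:
  "b \<in> gaifman_ball S M i a \<Longrightarrow> d \<in> gaifman_ball S M j b \<Longrightarrow> d \<in> gaifman_ball S M (i + j) a"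
  by (auto simp: gaifman_ball_def relpow_add)

lemma gaifman_ball_subset_sdom:
  assumes "wf_struct S M" "a \<in> sdom M"
  shows "gaifman_ball S M j a \<subseteq> sdom M"
proof (induction j)
  case (Suc j)
  then show ?case
    using neighbours_subset_sdom[OF assms(1)]
    by (fastforce simp: gaifman_ball_Suc gaifman_edges_def)
qed (use assms(2) in simp)

lemma centre_in_gaifman_ball: "a \<in> sdom M \<Longrightarrow> a \<in> gaifman_ball S M j a"
  by (induction j) (auto simp: gaifman_ball_Suc gaifman_edges_def)

lemma gaifman_ball_mono:
  assumes "wf_struct S M" "a \<in> sdom M" "i \<le> j"
  shows "gaifman_ball S M i a \<subseteq> gaifman_ball S M j a"
proof
  fix b assume b: "b \<in> gaifman_ball S M i a"
  then have "b \<in> sdom M" using gaifman_ball_subset_sdom[OF assms(1,2)] by blast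
  then have "b \<in> gaifman_ball S M (j - i) b" by (rule centre_in_gaifman_ball)
  then show "b \<in> gaifman_ball S M j a" using gaifman_ball_trans[OF b] assms(3) by fastforce
qed

lemma card_gaifman_ball_le:
  assumes deg: "\<forall>a\<in>sdom M. finite (neighbours S M a) \<and> card (neighbours S M a) \<le> N"
  shows "finite (gaifman_ball S M j a) \<and> card (gaifman_ball S M j a) \<le> (N + 1) ^ j"
proof (induction j)
  case (Suc j)
  have edges: "finite (gaifman_edges S M `` {b}) \<and> card (gaifman_edges S M `` {b}) \<le> N + 1" for b
  proof (cases "b \<in> sdom M")
    case True
    have "gaifman_edges S M `` {b} = insert b (neighbours S M b)"
      using True by (auto simp: gaifman_edges_def)
    then show ?thesis using deg True by (simp add: card_insert_le_m1)
  qed (simp add: gaifman_edges_def)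
  have "card (gaifman_ball S M (Suc j) a)
      \<le> (\<Sum>b\<in>gaifman_ball S M j a. card (gaifman_edges S M `` {b}))"
    unfolding gaifman_ball_Suc by (rule card_UN_le) (use Suc in blast)
  also have "\<dots> \<le> card (gaifman_ball S M j a) * (N + 1)"
    using edges sum_bounded_above[of _ "\<lambda>b. card (gaifman_edges S M `` {b})" "N + 1"] by auto
  also have "\<dots> \<le> (N + 1) ^ Suc j" using Suc mult_le_mono1 by (simp only: power_Suc2)
  finally have "card (gaifman_ball S M (Suc j) a) \<le> (N + 1) ^ Suc j" .
  moreover have "finite (gaifman_ball S M (Suc j) a)"
    unfolding gaifman_ball_Suc using Suc edges by (intro finite_UN_I) auto
  ultimately show ?case by simp
qed simp

lemma distance_colouring_exists:
  assumes "wf_struct S M" "bounded_degree S M"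
  shows "\<exists>B (c :: 'a \<Rightarrow> nat). (\<forall>a\<in>sdom M. c a \<le> B) \<and>
    (\<forall>a\<in>sdom M. \<forall>b\<in>gaifman_ball S M L a. a \<noteq> b \<longrightarrow> c a \<noteq> c b)"
proof -
  obtain N where deg: "\<forall>a\<in>sdom M. finite (neighbours S M a) \<and> card (neighbours S M a) \<le> N"
    using assms(2) unfolding bounded_degree_def by blast
  let ?nb = "\<lambda>a. gaifman_ball S M L a - {a}"
  have "\<forall>a\<in>sdom M. finite (?nb a) \<and> card (?nb a) \<le> (N + 1) ^ L"
    using card_gaifman_ball_le[OF deg] card_Diff1_le by (meson finite_Diff le_trans)
  moreover have "\<forall>a\<in>sdom M. a \<notin> ?nb a" by simp
  moreover have "\<forall>a\<in>sdom M. \<forall>b\<in>sdom M. b \<in> ?nb a \<longrightarrow> a \<in> ?nb b"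
    by (auto dest: gaifman_ball_sym[OF assms(1)])
  ultimately have "\<exists>c. (\<forall>a\<in>sdom M. c a \<le> (N + 1) ^ L) \<and>
      (\<forall>a\<in>sdom M. \<forall>b\<in>sdom M. b \<in> ?nb a \<longrightarrow> c a \<noteq> c b)"
    by (rule bounded_degree_colouring)
  then obtain c where bound: "\<forall>a\<in>sdom M. c a \<le> (N + 1) ^ L"
    and proper: "\<forall>a\<in>sdom M. \<forall>b\<in>sdom M. b \<in> ?nb a \<longrightarrow> c a \<noteq> c b"
    by blast
  have "c a \<noteq> c b" if "a \<in> sdom M" "b \<in> gaifman_ball S M L a" "a \<noteq> b" for a b
    using proper gaifman_ball_subset_sdom[OF assms(1)] that by blast
  then show ?thesis using bound by blast
qed

lemma mem_ptp_iff:
  "(k, as) \<in> ptp t M e \<Theta> \<longleftrightarrow> k < t \<and> (\<forall>a\<in>set as. wf_atom \<Theta> k a) \<and>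
     (\<exists>v. v 0 = e \<and> (\<forall>i\<in>{1..k}. v i \<in> sdom M) \<and> (\<forall>a\<in>set as. holds_atom M v a))"
  by (simp add: ptp_def)

lemma ptpI:
  assumes "k < t" "\<forall>a\<in>set as. wf_atom \<Theta> k a" "v 0 = e" "\<forall>i\<in>{1..k}. v i \<in> sdom M"
    "\<forall>a\<in>set as. holds_atom M v a"
  shows "(k, as) \<in> ptp t M e \<Theta>"
  using assms by (auto simp: mem_ptp_iff)

lemma ptp_eq_mono:
  assumes "t \<le> n" "ptp n M a \<Theta> = ptp n M b \<Theta>"
  shows "ptp t M a \<Theta> = ptp t M b \<Theta>"
proof -
  have "ptp t M x \<Theta> = {p \<in> ptp n M x \<Theta>. fst p < t}" for x
    using assms(1) by (auto simp: ptp_def)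
  then show ?thesis using assms(2) by simp
qed

lemma holds_atom_cong:
  assumes "wf_atom \<Theta> k at" "\<forall>i\<le>k. v i = v' i"
  shows "holds_atom M v at = holds_atom M v' at"
proof (cases at)
  case (RelA r ts)
  have "eval_trm M v t = eval_trm M v' t" if "t \<in> set ts" for t
    using assms that RelA by (cases t) auto
  then show ?thesis using RelA by (simp cong: map_cong)
qed (use assms in auto)

lemma ptp_eq_transfer_atom:
  assumes "ptp t M a \<Theta> = ptp t M b \<Theta>" "0 < t" "wf_atom \<Theta> 0 at" "holds_atom M (\<lambda>_. a) at"
  shows "holds_atom M (\<lambda>_. b) at"
proof -
  have "(0, [at]) \<in> ptp t M a \<Theta>"
    using assms by (intro ptpI[where v = "\<lambda>_. a"]) auto
  then obtain v where "v 0 = b" "holds_atom M v at"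
    using assms(1) by (auto simp: mem_ptp_iff)
  then show ?thesis using holds_atom_cong[OF assms(3)] by (metis le_zero_eq)
qed

fun ren_trm :: "(nat \<Rightarrow> nat) \<Rightarrow> 'c trm \<Rightarrow> 'c trm" where
  "ren_trm f (V i) = V (f i)"
| "ren_trm f (C c) = C c"

fun ren_atom :: "(nat \<Rightarrow> nat) \<Rightarrow> ('r, 'c) atom \<Rightarrow> ('r, 'c) atom" where
  "ren_atom f (RelA r ts) = RelA r (map (ren_trm f) ts)"
| "ren_atom f (EqA i c) = EqA (f i) c"

lemma wf_ren_atom:
  assumes "wf_atom \<Theta> k at" "\<forall>i\<le>k. f i \<le> k'"
  shows "wf_atom \<Theta> k' (ren_atom f at)"
proof (cases at)
  case (RelA r ts)
  have "wf_trm \<Theta> k' (ren_trm f t)" if "t \<in> set ts" for t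
    using assms that RelA by (cases t) auto
  then show ?thesis using assms RelA by auto
qed (use assms in auto)

lemma holds_ren_atom: "holds_atom M v (ren_atom f at) = holds_atom M (v \<circ> f) at"
proof -
  have "eval_trm M v \<circ> ren_trm f = eval_trm M (v \<circ> f)"
  proof
    show "(eval_trm M v \<circ> ren_trm f) t = eval_trm M (v \<circ> f) t" for t by (cases t) auto
  qed
  then show ?thesis by (cases at) auto
qed

lemma ptp_preserved_by_hom:
  assumes dom: "\<forall>a\<in>sdom M. h a \<in> sdom N"
    and rel: "\<forall>r\<in>rels \<Theta>. \<forall>ts\<in>rel M r. map h ts \<in> rel N r"
    and cst: "\<forall>k\<in>sconsts \<Theta>. cst N k = h (cst M k)"
    and p: "p \<in> ptp t M e \<Theta>"
  shows "p \<in> ptp t N (h e) \<Theta>"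
proof -
  obtain k as where p_def: "p = (k, as)" by (cases p)
  with p obtain v where k: "k < t" "\<forall>a\<in>set as. wf_atom \<Theta> k a"
    and v: "v 0 = e" "\<forall>i\<in>{1..k}. v i \<in> sdom M" "\<forall>a\<in>set as. holds_atom M v a"
    by (auto simp: mem_ptp_iff)
  have eval: "eval_trm N (h \<circ> v) x = h (eval_trm M v x)" if "wf_trm \<Theta> k x" for x
    using that cst by (cases x) auto
  have "holds_atom N (h \<circ> v) at" if "at \<in> set as" for at
  proof (cases at)
    case (RelA r ts)
    then have r: "r \<in> rels \<Theta>" and "\<forall>x\<in>set ts. wf_trm \<Theta> k x"
      using k(2) that by auto
    then have eq: "map (eval_trm N (h \<circ> v)) ts = map h (map (eval_trm M v) ts)"
      using eval by auto
    have "map (eval_trm M v) ts \<in> rel M r" using v(3) that RelA by auto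
    then have "map h (map (eval_trm M v) ts) \<in> rel N r" using rel r by blast
    then show ?thesis unfolding RelA holds_atom.simps eq .
  qed (use k(2) v(3) that cst in fastforce)
  then show ?thesis
    unfolding p_def using k v dom by (intro ptpI[where v = "h \<circ> v"]) auto
qed

section \<open>Binary atoms and the variable graph of a query\<close>

definition orient :: "bool \<Rightarrow> 'x \<Rightarrow> 'x \<Rightarrow> 'x list" where
  "orient d x y = (if d then [x, y] else [y, x])"

lemma map_orient [simp]: "map f (orient d x y) = orient d (f x) (f y)"
  and set_orient [simp]: "set (orient d x y) = {x, y}"
  and length_orient [simp]: "length (orient d x y) = 2"
  by (auto simp: orient_def)

lemma list_all2_orientE:
  assumes "list_all2 P ds (orient e x y)"
  obtains d1 d2 where "ds = orient e d1 d2" "P d1 x" "P d2 y"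
  using assms by (cases e) (auto simp: orient_def list_all2_Cons2)

lemma mem_short_list_cases:
  assumes "x \<in> set xs" "length xs \<le> 2"
  obtains "xs = [x]" | e y where "xs = orient e x y"
proof (cases xs)
  case (Cons a l)
  with assms show ?thesis
    by (cases l) (auto simp: orient_def intro: that)
qed (use assms in simp)

lemma orient_in_gaifman_ball:
  assumes "wf_struct S M" "r \<in> rels S" "orient d a b \<in> rel M r" "a \<in> sdom M"
  shows "b \<in> gaifman_ball S M 1 a" "b \<in> sdom M" "arity S r = 2"
proof -
  show "b \<in> gaifman_ball S M 1 a"
    using assms(2-4) by (intro neighbour_in_gaifman_ball) (auto simp: orient_def split: if_splits)
  show "b \<in> sdom M"
    using assms(1-3) unfolding wf_struct_def by (metis insert_subset set_orient)
  show "arity S r = 2"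
    using assms(1-3) unfolding wf_struct_def by (metis length_orient)
qed

definition query_graph :: "('r, 'c) atom list \<Rightarrow> nat rel" where
  "query_graph ats = {(i, p). \<exists>r d. RelA r (orient d (V i) (V p)) \<in> set ats}"

lemma sym_query_graph: "sym (query_graph ats)"
proof (rule symI)
  fix i p assume "(i, p) \<in> query_graph ats"
  then obtain r d where "RelA r (orient d (V i) (V p)) \<in> set ats" by (auto simp: query_graph_def)
  moreover have "orient d (V i) (V p) = orient (\<not> d) (V p) (V i)" by (simp add: orient_def)
  ultimately have "RelA r (orient (\<not> d) (V p) (V i)) \<in> set ats" by metis
  then show "(p, i) \<in> query_graph ats" unfolding query_graph_def by blast
qed

lemma query_graph_subset:
  assumes "\<forall>at\<in>set ats. wf_atom \<Theta> k at"
  shows "query_graph ats \<subseteq> {..k} \<times> {..k}"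
proof (rule subrelI)
  fix i p assume "(i, p) \<in> query_graph ats"
  then obtain r d where "RelA r (orient d (V i) (V p)) \<in> set ats" by (auto simp: query_graph_def)
  then have "wf_atom \<Theta> k (RelA r (orient d (V i) (V p)))" using assms by blast
  then show "(i, p) \<in> {..k} \<times> {..k}" by simp
qed

lemma query_graph_edge:
  assumes "(p, i) \<in> query_graph ats" "\<forall>at\<in>set ats. wf_atom \<Theta> k at"
    "\<forall>at\<in>set ats. holds_atom N v at"
  shows "\<exists>r\<in>rels \<Theta>. \<exists>d. orient d (v p) (v i) \<in> rel N r"
proof -
  obtain r d where at: "RelA r (orient d (V p) (V i)) \<in> set ats"
    using assms(1) unfolding query_graph_def by blast
  then have "r \<in> rels \<Theta>" using assms(2) by auto
  moreover have "orient d (v p) (v i) \<in> rel N r" using assms(3) at by fastforce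
  ultimately show ?thesis by blast
qed

lemma card_query_graph_le:
  assumes "\<forall>at\<in>set ats. wf_atom \<Theta> k at"
  shows "card (query_graph ats) \<le> Suc k * Suc k"
proof -
  have "card (query_graph ats) \<le> card ({..k} \<times> {..k})"
    using query_graph_subset[OF assms] by (intro card_mono) auto
  then show ?thesis by (simp add: card_cartesian_product)
qed

definition component_root :: "nat rel \<Rightarrow> nat \<Rightarrow> nat" where
  "component_root A i = (LEAST j. (j, i) \<in> A\<^sup>*)"

lemma component_root_le: "component_root A i \<le> i"
  unfolding component_root_def by (rule Least_le) simp

lemma component_root_path:
  assumes "finite A"
  shows "\<exists>j\<le>card A. (component_root A i, i) \<in> A ^^ j"
proof -
  have "(component_root A i, i) \<in> A\<^sup>*"
    unfolding component_root_def by (rule LeastI[of _ i]) simp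
  then have "(component_root A i, i) \<in> (\<Union>n\<in>{n. n \<le> card A}. A ^^ n)"
    by (simp only: rtrancl_finite_eq_relpow[OF assms])
  then show ?thesis by blast
qed

lemma component_root_eq:
  assumes "sym A" "(i, p) \<in> A"
  shows "component_root A i = component_root A p"
proof -
  have "(p, i) \<in> A" using assms by (rule symD)
  then have "(j, i) \<in> A\<^sup>* \<longleftrightarrow> (j, p) \<in> A\<^sup>*" for j
    using assms(2) by (meson rtrancl_into_rtrancl)
  then show ?thesis unfolding component_root_def by presburger
qed

definition colour_symbols :: "nat \<Rightarrow> (nat \<times> nat) set" where
  "colour_symbols B = {0} \<times> {0..B}"

definition coloured :: "('a, 'r, 'c) struct \<Rightarrow> ('a \<Rightarrow> nat) \<Rightarrow> ('a, 'r csym, 'c) struct" where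
  "coloured M c = \<lparr>sdom = sdom M,
     rel = (\<lambda>s. case s of Base r \<Rightarrow> rel M r | Color l h \<Rightarrow> {[a] | a. a \<in> sdom M \<and> l = 0 \<and> c a = h}),
     cst = cst M\<rparr>"

lemma coloured_simps [simp]:
  "sdom (coloured M c) = sdom M"
  "rel (coloured M c) (Base r) = rel M r"
  "cst (coloured M c) = cst M"
  "[a] \<in> rel (coloured M c) (Color l h) \<longleftrightarrow> a \<in> sdom M \<and> l = 0 \<and> c a = h"
  by (auto simp: coloured_def)

lemma rel_coloured_Color: "rel (coloured M c) (Color l h) = {[a] | a. a \<in> sdom M \<and> l = 0 \<and> c a = h}"
  by (simp add: coloured_def)

lemma colsig_simps [simp]:
  "rels (colsig S K) = Base ` rels S \<union> (\<lambda>(l, h). Color l h) ` K"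
  "sconsts (colsig S K) = sconsts S"
  "arity (colsig S K) (Base r) = arity S r"
  "arity (colsig S K) (Color l h) = 1"
  by (auto simp: colsig_def)

lemma coloured_is_coloring:
  assumes wf: "wf_struct S M" and bound: "\<forall>a\<in>sdom M. c a \<le> B"
  shows "is_coloring S M (colour_symbols B) (coloured M c)"
  unfolding is_coloring_def
proof (intro conjI)
  show "wf_struct (colsig S (colour_symbols B)) (coloured M c)"
    using wf unfolding wf_struct_def by (auto simp: colour_symbols_def rel_coloured_Color; blast)
  show "\<forall>a\<in>sdom (coloured M c).
      \<exists>!lh\<in>colour_symbols B. [a] \<in> rel (coloured M c) (Color (fst lh) (snd lh))"
    using bound by (auto simp: colour_symbols_def)
qed (auto simp: colour_symbols_def)

section \<open>Rigidity of types under a distance colouring\<close>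

locale distance_colouring =
  fixes S :: "('r, 'c) sgn" and M :: "('a, 'r, 'c) struct" and c :: "'a \<Rightarrow> nat" and B L :: nat
  assumes wf: "wf_struct S M"
    and colour_le: "\<forall>a\<in>sdom M. c a \<le> B"
    and colour_inj: "\<forall>a\<in>sdom M. \<forall>b\<in>gaifman_ball S M L a. a \<noteq> b \<longrightarrow> c a \<noteq> c b"
    and radius: "2 \<le> L"
begin

abbreviation "Sc \<equiv> colsig S (colour_symbols B)"
abbreviation "Mc \<equiv> coloured M c"

abbreviation same_type :: "nat \<Rightarrow> 'a \<Rightarrow> 'a \<Rightarrow> bool" where
  "same_type t a b \<equiv> ptp t Mc a Sc = ptp t Mc b Sc"

lemma colour_determines:
  assumes "a \<in> sdom M" "x \<in> gaifman_ball S M i a" "y \<in> gaifman_ball S M j a" "i + j \<le> L"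
    "c x = c y"
  shows "x = y"
proof -
  have x: "x \<in> sdom M" using gaifman_ball_subset_sdom[OF wf assms(1)] assms(2) by blast
  have "y \<in> gaifman_ball S M (i + j) x"
    using gaifman_ball_trans[OF gaifman_ball_sym[OF wf assms(2)] assms(3)] .
  then have "y \<in> gaifman_ball S M L x" using gaifman_ball_mono[OF wf x assms(4)] by blast
  then show ?thesis using colour_inj x assms(5) by blast
qed

lemma same_type_colour:
  assumes "same_type t a b" "0 < t" "a \<in> sdom M"
  shows "c a = c b"
proof -
  have "holds_atom Mc (\<lambda>_. b) (RelA (Color 0 (c a)) [V 0])"
    by (rule ptp_eq_transfer_atom[OF assms(1,2)])
      (use assms(3) colour_le in \<open>auto simp: colour_symbols_def\<close>)
  then show ?thesis by auto
qed

lemma neighbour_with_colour: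
  assumes "same_type t a a'" "1 < t" "r \<in> rels S" "orient d a' w' \<in> rel M r" "a' \<in> sdom M"
  shows "\<exists>w. orient d a w \<in> rel M r \<and> c w = c w'"
proof -
  have w': "w' \<in> sdom M" "arity S r = 2" using orient_in_gaifman_ball[OF wf assms(3-5)] by auto
  let ?q = "(1, [RelA (Base r) (orient d (V 0) (V 1)), RelA (Color 0 (c w')) [V 1]])"
  have "?q \<in> ptp t Mc a' Sc"
    using assms w' colour_le
    by (intro ptpI[where v = "\<lambda>i. if i = 0 then a' else w'"]) (auto simp: colour_symbols_def)
  then have "?q \<in> ptp t Mc a Sc" using assms(1) by simp
  then obtain v :: "nat \<Rightarrow> 'a" where "v 0 = a" "orient d (v 0) (v 1) \<in> rel M r" "c (v 1) = c w'"
    unfolding mem_ptp_iff by (clarsimp simp del: One_nat_def)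
  then show ?thesis by blast
qed

text \<open>At a the (t - 1)-type of w is expressed by the query "an r-neighbour of colour c w
  whose type contains p"; at a' its witness can only be w', the neighbour of that colour.\<close>

lemma neighbour_type_mono:
  assumes same: "same_type t a a'" and r: "r \<in> rels S"
    and edge: "orient d a w \<in> rel M r" and edge': "orient d a' w' \<in> rel M r"
    and colour: "c w = c w'" and a: "a \<in> sdom M" and a': "a' \<in> sdom M"
  shows "ptp (t - 1) Mc w Sc \<subseteq> ptp (t - 1) Mc w' Sc"
proof (rule subrelI)
  fix k as assume "(k, as) \<in> ptp (t - 1) Mc w Sc"
  then obtain u where k: "k < t - 1" and wf_as: "\<forall>at\<in>set as. wf_atom Sc k at"
    and u: "u 0 = w" "\<forall>i\<in>{1..k}. u i \<in> sdom M" "\<forall>at\<in>set as. holds_atom Mc u at"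
    by (auto simp: mem_ptp_iff)
  have w: "w \<in> sdom M" "arity S r = 2" using orient_in_gaifman_ball[OF wf r edge a] by auto
  let ?atoms = "RelA (Base r) (orient d (V 0) (V 1)) # RelA (Color 0 (c w)) [V 1]
              # map (ren_atom Suc) as"
  define v where "v i = (if i = 0 then a else u (i - 1))" for i
  have "v \<circ> Suc = u" by (auto simp: v_def)
  then have "\<forall>at\<in>set as. holds_atom Mc v (ren_atom Suc at)" using u(3) by (simp add: holds_ren_atom)
  then have "\<forall>at\<in>set ?atoms. holds_atom Mc v at" using u(1) w(1) edge by (simp add: v_def)
  moreover have "\<forall>at\<in>set ?atoms. wf_atom Sc (Suc k) at"
    using wf_as r w(2) colour_le w(1) by (auto intro: wf_ren_atom simp: colour_symbols_def)
  moreover have "v i \<in> sdom M" if "i \<in> {1..Suc k}" for i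
  proof (cases "i = 1")
    case False
    then have "i - 1 \<in> {1..k}" using that by auto
    then show ?thesis using u(2) that by (simp add: v_def)
  qed (use u(1) w(1) in \<open>simp add: v_def\<close>)
  ultimately have "(Suc k, ?atoms) \<in> ptp t Mc a Sc"
    using k by (intro ptpI[where v = v]) (simp_all add: v_def)
  then have "(Suc k, ?atoms) \<in> ptp t Mc a' Sc" using same by simp
  then obtain v' where v': "v' 0 = a'" "\<forall>i\<in>{1..Suc k}. v' i \<in> sdom M"
    "\<forall>at\<in>set ?atoms. holds_atom Mc v' at"
    unfolding mem_ptp_iff coloured_simps(1) by blast
  have "v' 1 = w'"
  proof (rule colour_determines[OF a'])
    show "v' 1 \<in> gaifman_ball S M 1 a'" "w' \<in> gaifman_ball S M 1 a'"
      using v'(1,3) orient_in_gaifman_ball(1)[OF wf r _ a'] edge' by auto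
    show "c (v' 1) = c w'" using v'(3) colour by simp
  qed (use radius in simp)
  moreover have "\<forall>at\<in>set as. holds_atom Mc (v' \<circ> Suc) at"
    using v'(3) by (simp add: holds_ren_atom)
  moreover have "\<forall>i\<in>{1..k}. (v' \<circ> Suc) i \<in> sdom M" using v'(2) by simp
  ultimately show "(k, as) \<in> ptp (t - 1) Mc w' Sc"
    using k wf_as by (intro ptpI[where v = "v' \<circ> Suc"]) simp_all
qed

lemma same_type_neighbour:
  assumes "same_type t a a'" "1 < t" "r \<in> rels S" "orient d a' w' \<in> rel M r"
    "a \<in> sdom M" "a' \<in> sdom M"
  shows "\<exists>w. orient d a w \<in> rel M r \<and> same_type (t - 1) w w'"
proof -
  obtain w where w: "orient d a w \<in> rel M r" "c w = c w'"
    using neighbour_with_colour[OF assms(1-4,6)] by blast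
  have "ptp (t - 1) Mc w Sc \<subseteq> ptp (t - 1) Mc w' Sc"
    using neighbour_type_mono[OF assms(1,3) w(1) assms(4) w(2) assms(5,6)] .
  moreover have "ptp (t - 1) Mc w' Sc \<subseteq> ptp (t - 1) Mc w Sc"
    using neighbour_type_mono[OF assms(1)[symmetric] assms(3,4) w(1) w(2)[symmetric] assms(6,5)] .
  ultimately show ?thesis using w(1) by blast
qed

lemma same_type_cst:
  assumes "same_type t (cst M k) w" "0 < t" "k \<in> sconsts S"
  shows "w = cst M k"
proof -
  have "holds_atom Mc (\<lambda>_. w) (EqA 0 k)"
    by (rule ptp_eq_transfer_atom[OF assms(1,2)]) (use assms(3) in simp_all)
  then show ?thesis by simp
qed

definition represents :: "(nat \<Rightarrow> 'a) \<Rightarrow> 'a \<Rightarrow> 'c trm \<Rightarrow> bool" where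
  "represents u d t \<longleftrightarrow> (case t of V i \<Rightarrow> d \<in> sdom M \<and> same_type 2 d (u i) | C k \<Rightarrow> d = cst M k)"

lemma represented_edge_pullback:
  assumes edge: "orient e d1 d2 \<in> rel M r" and r: "r \<in> rels S"
    and d: "represents u d1 (V i)" "represents u d2 t" and ui: "u i \<in> sdom M"
    and const: "\<And>k. t = C k \<Longrightarrow> k \<in> sconsts S"
    and close: "\<And>p. t = V p \<Longrightarrow> u p \<in> gaifman_ball S M (L - 1) (u i)"
  shows "orient e (u i) (eval_trm M u t) \<in> rel M r"
proof -
  have d1: "d1 \<in> sdom M" "same_type 2 (u i) d1" using d(1) by (simp_all add: represents_def)
  obtain w where w: "orient e (u i) w \<in> rel M r" "same_type 1 w d2"
    using same_type_neighbour[OF d1(2) _ r edge ui d1(1)] by auto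
  have w_near: "w \<in> gaifman_ball S M 1 (u i)" "w \<in> sdom M"
    using orient_in_gaifman_ball[OF wf r w(1) ui] by simp_all
  have "w = eval_trm M u t"
  proof (cases t)
    case (C k)
    then show ?thesis using d(2) const same_type_cst[of 1 k w] w(2) by (simp add: represents_def)
  next
    case (V p)
    then have "same_type 2 d2 (u p)" using d(2) by (simp add: represents_def)
    then have "same_type 1 w (u p)" using w(2) ptp_eq_mono[of 1 2] by simp
    then have "c w = c (u p)" using same_type_colour w_near(2) by simp
    then show ?thesis using colour_determines[OF ui w_near(1) close[OF V]] radius V by simp
  qed
  then show ?thesis using w(1) by simp
qed

lemma represented_rel_pullback:
  assumes bin: "binary_sig S" and r: "r \<in> rels S" "length ts = arity S r"
    and wf_ts: "\<forall>t\<in>set ts. wf_trm S k t"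
    and ds: "ds \<in> rel M r" "list_all2 (represents u) ds ts"
    and u: "\<And>i. i \<le> k \<Longrightarrow> u i \<in> sdom M"
    and close: "\<And>e i p. ts = orient e (V i) (V p) \<Longrightarrow> u p \<in> gaifman_ball S M (L - 1) (u i)"
  shows "map (eval_trm M u) ts \<in> rel M r"
proof (cases "\<forall>t\<in>set ts. \<exists>k'. t = C k'")
  case True
  have "list_all2 (\<lambda>d t. d = eval_trm M u t) ds ts"
  proof (rule list.rel_mono_strong[OF ds(2)])
    fix d t assume "t \<in> set ts" "represents u d t"
    then show "d = eval_trm M u t" using True by (force simp: represents_def)
  qed
  then show ?thesis using ds(1) by (simp add: list_all2_map2[symmetric] list.rel_eq)
next
  case False
  then obtain i where i: "V i \<in> set ts" by (metis trm.exhaust)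
  then have ui: "u i \<in> sdom M" using wf_ts u by fastforce
  have "length ts \<le> 2" using bin r by (auto simp: binary_sig_def)
  with i show ?thesis
  proof (cases rule: mem_short_list_cases)
    case 1
    then obtain d where d: "ds = [d]" "d \<in> sdom M" "same_type 2 d (u i)"
      using ds(2) by (auto simp: list_all2_Cons2 represents_def)
    have "holds_atom Mc (\<lambda>_. u i) (RelA (Base r) [V 0])"
      using d ds(1) r 1 by (intro ptp_eq_transfer_atom[of 2 Mc d Sc "u i"]) auto
    then show ?thesis using 1 by simp
  next
    case (2 e t')
    obtain d1 d2 where d: "ds = orient e d1 d2" "represents u d1 (V i)" "represents u d2 t'"
      using ds(2) 2 by (auto elim: list_all2_orientE)
    have "orient e (u i) (eval_trm M u t') \<in> rel M r"
    proof (rule represented_edge_pullback[OF _ r(1) d(2,3) ui])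
      show "orient e d1 d2 \<in> rel M r" using ds(1) d(1) by simp
      show "k' \<in> sconsts S" if "t' = C k'" for k' using that wf_ts 2 by auto
      show "u p \<in> gaifman_ball S M (L - 1) (u i)" if "t' = V p" for p using that close 2 by blast
    qed
    then show ?thesis using 2 by simp
  qed
qed

end

section \<open>The quotient by types\<close>

text \<open>D bounds the number of edges of the variable graph of a query and n is the level of the
  types identified by the quotient.\<close>

locale coloured_quotient = distance_colouring S M c B "2 * D + 2"
  for S :: "('r, 'c) sgn" and M :: "('a, 'r, 'c) struct" and c B D +
  fixes n :: nat
  assumes level: "D + 2 \<le> n"
begin

abbreviation "cls \<equiv> qmap n Sc Mc"
abbreviation "Q \<equiv> reduct (quot n Sc Mc)"

lemma mem_cls_iff: "d \<in> cls x \<longleftrightarrow> d \<in> sdom M \<and> same_type n d x"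
  by (simp add: qmap_def ptp_equiv_def)

lemma Q_simps:
  "sdom Q = cls ` sdom M"
  "rel Q r = {Xs. (\<forall>X\<in>set Xs. X \<in> cls ` sdom M) \<and>
     (\<exists>ds. length ds = length Xs \<and> ds \<in> rel M r \<and> (\<forall>i<length ds. ds ! i \<in> Xs ! i))}"
  "cst Q k = cls (cst M k)"
  by (simp_all add: reduct_def quot_def)

lemma ptp_subset_quotient: "ptp m M e S \<subseteq> ptp m Q (cls e) S"
proof (rule subsetI, rule ptp_preserved_by_hom[where h = cls])
  show "\<forall>a\<in>sdom M. cls a \<in> sdom Q" by (simp add: Q_simps)
  show "\<forall>k\<in>sconsts S. cst Q k = cls (cst M k)" by (simp add: Q_simps)
  show "\<forall>r\<in>rels S. \<forall>ts\<in>rel M r. map cls ts \<in> rel Q r"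
  proof (intro ballI)
    fix r ts assume "r \<in> rels S" "ts \<in> rel M r"
    then have "set ts \<subseteq> sdom M" using wf by (auto simp: wf_struct_def)
    then show "map cls ts \<in> rel Q r"
      using \<open>ts \<in> rel M r\<close> by (auto simp: Q_simps mem_cls_iff intro!: exI[of _ ts] dest: nth_mem)
  qed
qed

lemma const_class:
  assumes "k \<in> sconsts S" "d \<in> cls (cst M k)"
  shows "d = cst M k"
proof -
  have "same_type n (cst M k) d" using assms(2) by (simp add: mem_cls_iff)
  then show ?thesis using same_type_cst assms(1) level by simp
qed

lemma quotient_edge_lift:
  assumes edge: "orient d (cls y) (cls z) \<in> rel Q r" and r: "r \<in> rels S"
    and same: "same_type t a y" and t: "1 < t" "t \<le> n" and a: "a \<in> sdom M"
  shows "\<exists>w. orient d a w \<in> rel M r \<and> same_type (t - 1) w z"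
proof -
  obtain ds where ds: "length ds = 2" "ds \<in> rel M r" "ds ! 0 \<in> orient d (cls y) (cls z) ! 0"
    "ds ! 1 \<in> orient d (cls y) (cls z) ! 1"
    using edge by (auto simp: Q_simps)
  then obtain x w' where "ds = orient d x w'" "x \<in> cls y" "w' \<in> cls z"
    by (cases d) (auto simp: orient_def length_Suc_conv numeral_2_eq_2)
  with ds(2) have edge': "orient d x w' \<in> rel M r" and x: "x \<in> sdom M" "same_type n x y"
    and w': "same_type n w' z"
    by (auto simp: mem_cls_iff)
  have "same_type t a x" using same ptp_eq_mono[OF t(2) x(2)] by simp
  then obtain w where w: "orient d a w \<in> rel M r" "same_type (t - 1) w w'"
    using same_type_neighbour[OF _ t(1) r edge' a x(1)] by blast
  moreover have "same_type (t - 1) w' z" using ptp_eq_mono[OF _ w'] t by simp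
  ultimately show ?thesis by auto
qed

definition quotient_adjacent :: "'a \<Rightarrow> 'a \<Rightarrow> bool" where
  "quotient_adjacent x z \<longleftrightarrow> (\<exists>r\<in>rels S. \<exists>d. orient d (cls x) (cls z) \<in> rel Q r)"

lemma quotient_walk_lift:
  assumes edges: "\<And>p i. (p, i) \<in> A \<Longrightarrow> quotient_adjacent (rep p) (rep i)"
    and root: "rep \<rho> \<in> sdom M"
  shows "(\<rho>, i) \<in> A ^^ j \<Longrightarrow> j \<le> D \<Longrightarrow>
    \<exists>a\<in>gaifman_ball S M j (rep \<rho>). same_type (n - j) a (rep i)"
proof (induction j arbitrary: i)
  case (Suc j)
  then obtain p where walk: "(\<rho>, p) \<in> A ^^ j" and step: "(p, i) \<in> A" by auto
  obtain a where a: "a \<in> gaifman_ball S M j (rep \<rho>)" "same_type (n - j) a (rep p)"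
    using Suc.IH[OF walk] Suc.prems(2) by auto
  obtain r d where r: "r \<in> rels S" "orient d (cls (rep p)) (cls (rep i)) \<in> rel Q r"
    using edges[OF step] unfolding quotient_adjacent_def by blast
  have "a \<in> sdom M" using gaifman_ball_subset_sdom[OF wf root] a(1) by blast
  moreover have "1 < n - j" "n - j \<le> n" using Suc.prems(2) level by auto
  ultimately obtain w where w: "orient d a w \<in> rel M r" "same_type (n - j - 1) w (rep i)"
    using quotient_edge_lift[OF r(2) r(1) a(2)] by blast
  have "w \<in> gaifman_ball S M (Suc j) (rep \<rho>)"
    using gaifman_ball_trans[OF a(1) orient_in_gaifman_ball(1)[OF wf r(1) w(1) \<open>a \<in> sdom M\<close>]]
    by simp
  moreover have "same_type (n - Suc j) w (rep i)" using w(2) by simp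
  ultimately show ?case by blast
qed (use root in simp)

definition lift_near :: "'a \<Rightarrow> 'a \<Rightarrow> 'a" where
  "lift_near x y = (THE a. a \<in> gaifman_ball S M D x \<and> c a = c y)"

lemma lift_near_eqI:
  assumes "x \<in> sdom M" "a \<in> gaifman_ball S M D x" "c a = c y"
  shows "lift_near x y = a"
  unfolding lift_near_def
proof (rule the_equality)
  fix b assume "b \<in> gaifman_ball S M D x \<and> c b = c y"
  then show "b = a" using colour_determines[OF assms(1) _ assms(2), of b D] assms(3) by simp
qed (use assms(2,3) in blast)

lemma lift_near_walk:
  assumes edges: "\<And>p i. (p, i) \<in> A \<Longrightarrow> quotient_adjacent (rep p) (rep i)"
    and root: "rep \<rho> \<in> sdom M" and walk: "(\<rho>, i) \<in> A ^^ j" "j \<le> D"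
  shows "lift_near (rep \<rho>) (rep i) \<in> gaifman_ball S M D (rep \<rho>)"
    "same_type 2 (lift_near (rep \<rho>) (rep i)) (rep i)"
proof -
  obtain a where a: "a \<in> gaifman_ball S M j (rep \<rho>)" "same_type (n - j) a (rep i)"
    using quotient_walk_lift[where A = A and rep = rep, OF edges root walk] by blast
  have a_ball: "a \<in> gaifman_ball S M D (rep \<rho>)"
    using gaifman_ball_mono[OF wf root walk(2)] a(1) by blast
  have a_type: "same_type 2 a (rep i)" using ptp_eq_mono[OF _ a(2)] walk(2) level by simp
  have "a \<in> sdom M" using gaifman_ball_subset_sdom[OF wf root] a(1) by blast
  then have "lift_near (rep \<rho>) (rep i) = a"
    using lift_near_eqI[OF root a_ball] same_type_colour[OF a_type] by simp
  then show "lift_near (rep \<rho>) (rep i) \<in> gaifman_ball S M D (rep \<rho>)"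
    "same_type 2 (lift_near (rep \<rho>) (rep i)) (rep i)"
    using a_ball a_type by simp_all
qed

text \<open>Each component of A is anchored at the representative of its least vertex, and every
  vertex is lifted to the element of its colour within distance D of the anchor.\<close>

lemma component_lift:
  fixes A :: "nat rel"
  assumes A: "A \<subseteq> {..k} \<times> {..k}" "sym A" "card A \<le> D"
    and edges: "\<And>p i. (p, i) \<in> A \<Longrightarrow> quotient_adjacent (rep p) (rep i)"
    and rep: "\<forall>i\<le>k. rep i \<in> sdom M"
  shows "\<exists>u. u 0 = rep 0 \<and> (\<forall>i\<le>k. u i \<in> sdom M \<and> same_type 2 (u i) (rep i)) \<and>
    (\<forall>(i, p)\<in>A. u p \<in> gaifman_ball S M (2 * D + 1) (u i))"
proof -
  have "finite A" by (rule finite_subset[OF A(1)]) simp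
  define anchor where "anchor i = rep (component_root A i)" for i
  have anchor: "anchor i \<in> sdom M" if "i \<le> k" for i
    using rep that component_root_le[of A i] by (simp add: anchor_def)
  define u where "u i = lift_near (anchor i) (rep i)" for i
  have u: "u i \<in> gaifman_ball S M D (anchor i)" "same_type 2 (u i) (rep i)" if "i \<le> k" for i
  proof -
    obtain j where "j \<le> card A" "(component_root A i, i) \<in> A ^^ j"
      using component_root_path[OF \<open>finite A\<close>] by blast
    then show "u i \<in> gaifman_ball S M D (anchor i)" "same_type 2 (u i) (rep i)"
      using lift_near_walk[where A = A and rep = rep, OF edges anchor[OF that, unfolded anchor_def]]
        A(3)
      by (simp_all add: u_def anchor_def)
  qed
  have u_sdom: "u i \<in> sdom M" if "i \<le> k" for i
    using gaifman_ball_subset_sdom[OF wf anchor[OF that]] u(1)[OF that] by blast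
  have "anchor 0 = rep 0" using component_root_le[of A 0] by (simp add: anchor_def)
  then have "u 0 = rep 0"
    using lift_near_eqI[OF anchor[of 0] centre_in_gaifman_ball[OF anchor[of 0]]]
    by (simp add: u_def)
  moreover have "u p \<in> gaifman_ball S M (2 * D + 1) (u i)" if "(i, p) \<in> A" for i p
  proof -
    have "i \<le> k" "p \<le> k" using that A(1) by auto
    moreover have "anchor p = anchor i"
      using component_root_eq[OF A(2) that] by (simp add: anchor_def)
    ultimately have "anchor i \<in> gaifman_ball S M D (u i)" "u p \<in> gaifman_ball S M D (anchor i)"
      using u(1) gaifman_ball_sym[OF wf] by metis+
    then have "u p \<in> gaifman_ball S M (D + D) (u i)" by (rule gaifman_ball_trans)
    moreover have "D + D \<le> 2 * D + 1" by simp
    ultimately show ?thesis using gaifman_ball_mono[OF wf u_sdom[OF \<open>i \<le> k\<close>]] by blast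
  qed
  ultimately show ?thesis using u(2) u_sdom by blast
qed

lemma quotient_atom_pullback:
  assumes bin: "binary_sig S" and at: "wf_atom S k at" "holds_atom Q vQ at"
    and rep: "\<And>i d. i \<le> k \<Longrightarrow> d \<in> vQ i \<Longrightarrow> d \<in> sdom M \<and> same_type 2 d (u i)"
    and u: "\<And>i. i \<le> k \<Longrightarrow> u i \<in> sdom M"
    and close: "\<And>r e i p. at = RelA r (orient e (V i) (V p)) \<Longrightarrow>
      u p \<in> gaifman_ball S M (2 * D + 1) (u i)"
  shows "holds_atom M u at"
proof (cases at)
  case (RelA r ts)
  then have r: "r \<in> rels S" "length ts = arity S r" and wf_ts: "\<forall>t\<in>set ts. wf_trm S k t"
    using at(1) by simp_all
  obtain ds where ds: "ds \<in> rel M r" "list_all2 (\<lambda>d t. d \<in> eval_trm Q vQ t) ds ts"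
    using at(2) RelA by (auto simp: Q_simps list_all2_conv_all_nth)
  have "list_all2 (represents u) ds ts"
  proof (rule list.rel_mono_strong[OF ds(2)])
    fix d t assume t: "t \<in> set ts" "d \<in> eval_trm Q vQ t"
    show "represents u d t"
    proof (cases t)
      case (V i)
      then show ?thesis using t wf_ts rep by (fastforce simp: represents_def)
    next
      case (C k')
      then show ?thesis using t wf_ts const_class by (fastforce simp: represents_def Q_simps)
    qed
  qed
  then have "map (eval_trm M u) ts \<in> rel M r"
    using represented_rel_pullback[OF bin r wf_ts ds(1)] u close RelA by simp
  then show ?thesis using RelA by simp
next
  case (EqA i k')
  then have k': "i \<le> k" "k' \<in> sconsts S" "vQ i = cls (cst M k')" using at by (simp_all add: Q_simps)
  have "cst M k' \<in> cls (cst M k')" using wf k'(2) by (simp add: wf_struct_def mem_cls_iff)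
  then have "same_type 2 (cst M k') (u i)" using rep[OF k'(1)] k'(3) by simp
  then have "u i = cst M k'" using same_type_cst k'(2) by simp
  then show ?thesis using EqA by simp
qed

lemma quotient_representatives:
  fixes vQ :: "nat \<Rightarrow> 'a set"
  assumes "vQ 0 = cls e" "e \<in> sdom M" "\<forall>i\<in>{1..k}. vQ i \<in> sdom Q"
  obtains rep where "rep 0 = e" "\<forall>i\<le>k. rep i \<in> sdom M \<and> vQ i = cls (rep i)"
proof -
  have "\<exists>x. x \<in> sdom M \<and> vQ i = cls x \<and> (i = 0 \<longrightarrow> x = e)" if "i \<in> {..k}" for i
  proof (cases "i = 0")
    case False
    then have "i \<in> {1..k}" using that by auto
    then have "vQ i \<in> cls ` sdom M" using assms(3) by (simp add: Q_simps)
    then show ?thesis using False by blast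
  qed (use assms(1,2) in blast)
  then obtain rep where "\<forall>i\<in>{..k}. rep i \<in> sdom M \<and> vQ i = cls (rep i) \<and> (i = 0 \<longrightarrow> rep i = e)"
    by (metis (mono_tags, lifting) bchoice)
  then show ?thesis using that[of rep] by fastforce
qed

lemma ptp_quotient_subset:
  assumes bin: "binary_sig S" and e: "e \<in> sdom M" and m: "m * m \<le> D"
  shows "ptp m Q (cls e) S \<subseteq> ptp m M e S"
proof (rule subrelI)
  fix k ats assume "(k, ats) \<in> ptp m Q (cls e) S"
  then obtain vQ where k: "k < m" and wf_ats: "\<forall>at\<in>set ats. wf_atom S k at"
    and vQ: "vQ 0 = cls e" "\<forall>i\<in>{1..k}. vQ i \<in> sdom Q" "\<forall>at\<in>set ats. holds_atom Q vQ at"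
    by (auto simp: mem_ptp_iff)
  obtain rep where rep: "rep 0 = e" "\<forall>i\<le>k. rep i \<in> sdom M \<and> vQ i = cls (rep i)"
    using quotient_representatives[OF vQ(1) e vQ(2)] by blast
  let ?A = "query_graph ats"
  have "card ?A \<le> D"
    using card_query_graph_le[OF wf_ats] mult_le_mono[of "Suc k" m "Suc k" m] k m by linarith
  moreover have "quotient_adjacent (rep p) (rep i)" if "(p, i) \<in> ?A" for p i
  proof -
    have "p \<le> k" "i \<le> k" using query_graph_subset[OF wf_ats] that by auto
    then have "vQ p = cls (rep p)" "vQ i = cls (rep i)" using rep(2) by simp_all
    then show ?thesis
      using query_graph_edge[OF that wf_ats vQ(3)] unfolding quotient_adjacent_def by simp
  qed
  ultimately obtain u where u: "u 0 = rep 0" "\<forall>i\<le>k. u i \<in> sdom M \<and> same_type 2 (u i) (rep i)"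
    and close: "\<forall>(i, p)\<in>?A. u p \<in> gaifman_ball S M (2 * D + 1) (u i)"
    using component_lift[OF query_graph_subset[OF wf_ats] sym_query_graph, of rep] rep by blast
  have "holds_atom M u at" if at: "at \<in> set ats" for at
  proof (rule quotient_atom_pullback[OF bin])
    show "wf_atom S k at" "holds_atom Q vQ at" using at wf_ats vQ(3) by auto
    show "d \<in> sdom M \<and> same_type 2 d (u i)" if "i \<le> k" "d \<in> vQ i" for i d
    proof -
      have "d \<in> sdom M" "same_type n d (rep i)" using that rep(2) by (auto simp: mem_cls_iff)
      moreover have "same_type 2 (u i) (rep i)" using that(1) u(2) by blast
      ultimately show ?thesis using ptp_eq_mono[of 2 n] level by simp
    qed
    show "u p \<in> gaifman_ball S M (2 * D + 1) (u i)"
      if "at = RelA r (orient e (V i) (V p))" for r e i p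
    proof -
      have "(i, p) \<in> ?A" unfolding query_graph_def using that at by blast
      then show ?thesis using close by blast
    qed
  qed (use u(2) in blast)
  then show "(k, ats) \<in> ptp m M e S"
    using k wf_ats u rep(1) by (intro ptpI[where v = u]) auto
qed

lemma quotient_conservative:
  assumes "binary_sig S" "m * m \<le> D"
  shows "conservative_upto S M (colour_symbols B) Mc n m"
  unfolding conservative_upto_def
  by (intro ballI equalityI ptp_subset_quotient ptp_quotient_subset[OF assms(1) _ assms(2)])

end

theorem lemma19:
  fixes \<Sigma> :: "('r, 'c) sgn" and M :: "('a, 'r, 'c) struct"
  assumes "finite (rels \<Sigma>)" and "finite (sconsts \<Sigma>)"
    and "binary_sig \<Sigma>"
    and "wf_struct \<Sigma> M"
    and "bounded_degree \<Sigma> M"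
  shows "ptp_conservative \<Sigma> M"
  unfolding ptp_conservative_def
proof
  fix m :: nat
  define D where "D = m * m"
  obtain B and c :: "'a \<Rightarrow> nat" where colour: "\<forall>a\<in>sdom M. c a \<le> B"
    "\<forall>a\<in>sdom M. \<forall>b\<in>gaifman_ball \<Sigma> M (2 * D + 2) a. a \<noteq> b \<longrightarrow> c a \<noteq> c b"
    using distance_colouring_exists[OF assms(4,5), of "2 * D + 2"] by blast
  interpret coloured_quotient \<Sigma> M c B D "D + 2"
    using assms(4) colour by unfold_locales auto
  show "\<exists>n K Mb. is_coloring \<Sigma> M K Mb \<and> conservative_upto \<Sigma> M K Mb n m"
    using coloured_is_coloring[OF assms(4) colour(1)] quotient_conservative[OF assms(3)] D_def
    by blast
qed

end
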